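(* Let $p_0,q_0>0$ and let $\tilde\Delta(p_0,q_0)=\{(p,q):\ 0<p\le p_0,\ 0<q\le q_0,\ q_0/p_0\le q/p\}$. (1) If $x,y$ are real sequences tending to $0$ with $x\lessgtr y$ and $\|x\|_{\ell(p_0,q_0)}\ge\|y\|_{\ell(p_0,q_0)}$ (resp. $>$), then for every $(p,q)\in\tilde\Delta(p_0,q_0)$ we have $\|x\|_{\ell(p,q)}\ge\|y\|_{\ell(p,q)}$ (resp. $>$). (2) Conversely, if $(p,q)\notin\tilde\Delta(p_0,q_0)$ (with $p,q>0$), then there exist sequences $x,y$, each having at most two nonzero entries, such that $x\lessgtr y$, $\|x\|_{\ell(p_0,q_0)}>\|y\|_{\ell(p_0,q_0)}$ and $\|x\|_{\ell(p,q)}<\|y\|_{\ell(p,q)}$.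
   Context: For a real sequence $x=(x_n)_{n\ge1}$ tending to $0$, $x^*=(x_n^* )$ is the nonincreasing permutation of $(|x_n|)$. For $p,q>0$, $\|x\|_{\ell(p,q)}=\bigl(\sum_{n=1}^\infty(x_n^* )^q n^{q/p-1}\bigr)^{1/q}$. We write $x\lessgtr y$ (equivalently $y\gtrless x$) if there is $n_0\in\mathbb N$ with $x_n^*\le y_n^*$ for $n\le n_0$ and $x_n^*\ge y_n^*$ for $n>n_0$. *)

theory Defs
  imports "HOL-Analysis.Analysis"
begin

text \<open>Sequences x = (x_1, x_2, ...) are represented 0-based: x_k is stored as x (k-1).
  dec_rearr x n is the (n+1)-st term of the nonincreasing rearrangement x^* of (|x_k|),
  defined via the distribution function (standard for sequences tending to 0).\<close>

definition dec_rearr :: "(nat \<Rightarrow> real) \<Rightarrow> nat \<Rightarrow> real" where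
  "dec_rearr x n = Inf {t. 0 \<le> t \<and> finite {k. t < \<bar>x k\<bar>} \<and> card {k. t < \<bar>x k\<bar>} \<le> n}"

definition lorentz_norm :: "real \<Rightarrow> real \<Rightarrow> (nat \<Rightarrow> real) \<Rightarrow> ereal" where
  "lorentz_norm p q x =
     (let f = (\<lambda>n. dec_rearr x n powr q * real (Suc n) powr (q / p - 1))
      in if summable f then ereal (suminf f powr (1 / q)) else \<infinity>)"

text \<open>x \<lessgtr> y: there is n0 \<in> \<nat> (n0 \<ge> 1) with x^*_m \<le> y^*_m for m \<le> n0 and
  x^*_m \<ge> y^*_m for m > n0 (1-based m; here n = m - 1).\<close>

definition lessgtr :: "(nat \<Rightarrow> real) \<Rightarrow> (nat \<Rightarrow> real) \<Rightarrow> bool" where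
  "lessgtr x y \<longleftrightarrow> (\<exists>n0::nat. n0 \<ge> 1 \<and>
      (\<forall>n. n < n0 \<longrightarrow> dec_rearr x n \<le> dec_rearr y n) \<and>
      (\<forall>n. n \<ge> n0 \<longrightarrow> dec_rearr x n \<ge> dec_rearr y n))"

definition tDelta :: "real \<Rightarrow> real \<Rightarrow> (real \<times> real) set" where
  "tDelta p0 q0 = {(p, q). 0 < p \<and> p \<le> p0 \<and> 0 < q \<and> q \<le> q0 \<and> q0 / p0 \<le> q / p}"

end

theory Submission
  imports Defs
begin

(*
  Put a = x^*, b = y^*, r = q/q0 \<le> 1 and s = q/p \<ge> s0 = q0/p0. By concavity of t \<mapsto> t^r,
  a_n^q - b_n^q \<ge> r (a_n^q0)^(r-1) (a_n^q0 - b_n^q0), so the difference of the (p,q)-terms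
  dominates the difference of the (p0,q0)-terms times the slope r (a_n^q0)^(r-1) (n+1)^(s-s0).
  The slope is nondecreasing in n while a_n - b_n changes sign only once, at the crossing
  point n0; hence freezing the slope at n0 gives, termwise and after summation,
  \<Sum> terms(p,q)(a) - \<Sum> terms(p,q)(b) \<ge> K (\<Sum> terms(p0,q0)(a) - \<Sum> terms(p0,q0)(b)) with K > 0.
  Comparing a with the step sequence a_0 on [0, N) in the same way shows that a nonincreasing
  sequence in l(p,q) lies in l(p0,q0), which settles summability.

  Conversely, outside the triangle move mass from the first to the second entry of the two-point
  sequence (1, \<rho>): x = (1 - r h, \<rho> + h). At h = 0 the derivative of the q-th power of the
  (p,q)-norm is q (2^(s-1) \<rho>^(q-1) - r). Choosing \<rho> = 2^(-t) with t (q - q0) > s - s0 makes the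
  slope for (p0,q0) exceed the one for (p,q), and any r strictly between them makes one norm
  increase and the other decrease for small h > 0.
*)

lemma powr_le_tangent:
  fixes A B r :: real
  assumes "0 < A" "0 \<le> B" "0 < r" "r \<le> 1"
  shows "B powr r \<le> A powr r + r * A powr (r - 1) * (B - A)"
proof -
  have A_powr: "A powr (r - 1) * A = A powr r"
    using \<open>0 < A\<close> by (simp add: powr_diff)
  show ?thesis
  proof (cases "B = 0")
    case True
    then show ?thesis using A_powr assms by (simp add: algebra_simps mult_left_le)
  next
    case False
    have "B powr r = (B powr r * A powr (1 - r)) * A powr (r - 1)"
      using assms by (simp add: mult.assoc flip: powr_add)
    also have "\<dots> \<le> (r * B + (1 - r) * A) * A powr (r - 1)"
      using Youngs_inequality_0[of r "1 - r" B A] assms False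
      by (intro mult_right_mono) auto
    also have "\<dots> = A powr r + r * A powr (r - 1) * (B - A)"
      using A_powr by (simp add: algebra_simps)
    finally show ?thesis .
  qed
qed

lemma powr_le_powr_iff:
  fixes u v a :: real
  assumes "0 \<le> u" "0 \<le> v" "0 < a"
  shows "u powr a \<le> v powr a \<longleftrightarrow> u \<le> v"
  using assms powr_mono2[of a u v] powr_less_mono2[of a v u] by (auto simp: not_le[symmetric])

lemma powr_less_powr_iff:
  fixes u v a :: real
  assumes "0 \<le> u" "0 \<le> v" "0 < a"
  shows "u powr a < v powr a \<longleftrightarrow> u < v"
  using powr_le_powr_iff[OF assms(2,1,3)] by linarith

lemma exists_pos_mult_gt:
  fixes c d :: real
  assumes "c < 0 \<or> 0 < d"
  obtains t where "0 < t" "c < t * d"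
proof (cases "0 < d")
  case True
  have "(\<bar>c\<bar> + 1) / d * d = \<bar>c\<bar> + 1"
    using True by simp
  with True show thesis
    by (intro that[of "(\<bar>c\<bar> + 1) / d"]) auto
next
  case False
  with assms have "c < 0" by simp
  have "c < c / (d - 1) * d"
    using False \<open>c < 0\<close> by (simp add: field_simps)
  with False \<open>c < 0\<close> show thesis
    by (intro that[of "c / (d - 1)"]) (auto simp: divide_neg_neg)
qed

lemma eventually_at_right_of_DERIV:
  fixes f :: "real \<Rightarrow> real"
  assumes "(f has_real_derivative l) (at x)"
  shows "0 < l \<Longrightarrow> eventually (\<lambda>y. f x < f y) (at_right x)"
    and "l < 0 \<Longrightarrow> eventually (\<lambda>y. f y < f x) (at_right x)"
proof -
  assume "0 < l"
  then obtain d where d: "0 < d" "\<And>h. 0 < h \<Longrightarrow> h < d \<Longrightarrow> f x < f (x + h)"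
    using DERIV_pos_inc_right[OF assms] by blast
  have "f x < f y" if "x < y" "y < x + d" for y
    using d(2)[of "y - x"] that by simp
  then show "eventually (\<lambda>y. f x < f y) (at_right x)"
    unfolding eventually_at_right_field using \<open>0 < d\<close> by (intro exI[of _ "x + d"]) auto
next
  assume "l < 0"
  then obtain d where d: "0 < d" "\<And>h. 0 < h \<Longrightarrow> h < d \<Longrightarrow> f (x + h) < f x"
    using DERIV_neg_dec_right[OF assms] by blast
  have "f y < f x" if "x < y" "y < x + d" for y
    using d(2)[of "y - x"] that by simp
  then show "eventually (\<lambda>y. f y < f x) (at_right x)"
    unfolding eventually_at_right_field using \<open>0 < d\<close> by (intro exI[of _ "x + d"]) auto
qed

definition lorentz_term :: "real \<Rightarrow> real \<Rightarrow> (nat \<Rightarrow> real) \<Rightarrow> nat \<Rightarrow> real" where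
  "lorentz_term p q a n = a n powr q * real (Suc n) powr (q / p - 1)"

definition lorentz_seq_norm :: "real \<Rightarrow> real \<Rightarrow> (nat \<Rightarrow> real) \<Rightarrow> ereal" where
  "lorentz_seq_norm p q a =
     (if summable (lorentz_term p q a) then ereal (suminf (lorentz_term p q a) powr (1 / q)) else \<infinity>)"

lemma lorentz_norm_eq_seq_norm: "lorentz_norm p q x = lorentz_seq_norm p q (dec_rearr x)"
  unfolding lorentz_norm_def lorentz_seq_norm_def lorentz_term_def Let_def ..

lemma lorentz_term_nonneg: "0 \<le> lorentz_term p q a n"
  unfolding lorentz_term_def by simp

lemma lorentz_term_mono:
  "0 \<le> q \<Longrightarrow> 0 \<le> a n \<Longrightarrow> a n \<le> b n \<Longrightarrow> lorentz_term p q a n \<le> lorentz_term p q b n"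
  unfolding lorentz_term_def by (intro mult_right_mono powr_mono2) auto

lemma lorentz_seq_norm_le_iff:
  assumes "0 < q" "summable (lorentz_term p q a)" "summable (lorentz_term p q b)"
  shows "lorentz_seq_norm p q a \<le> lorentz_seq_norm p q b \<longleftrightarrow>
    suminf (lorentz_term p q a) \<le> suminf (lorentz_term p q b)"
  using assms powr_le_powr_iff[of "suminf (lorentz_term p q a)" "suminf (lorentz_term p q b)" "1 / q"]
  by (simp add: lorentz_seq_norm_def suminf_nonneg lorentz_term_nonneg)

lemma lorentz_seq_norm_less_iff:
  assumes "0 < q" "summable (lorentz_term p q a)" "summable (lorentz_term p q b)"
  shows "lorentz_seq_norm p q a < lorentz_seq_norm p q b \<longleftrightarrow>
    suminf (lorentz_term p q a) < suminf (lorentz_term p q b)"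
  using assms powr_less_powr_iff[of "suminf (lorentz_term p q a)" "suminf (lorentz_term p q b)" "1 / q"]
  by (simp add: lorentz_seq_norm_def suminf_nonneg lorentz_term_nonneg)

lemma lorentz_term_suminf_dominated_eq:
  assumes "0 < q" and a_nonneg: "\<And>n. 0 \<le> a n" and le: "\<And>n. a n \<le> b n"
    and sa: "summable (lorentz_term p q a)" and sb: "summable (lorentz_term p q b)"
    and sums_le: "suminf (lorentz_term p q b) \<le> suminf (lorentz_term p q a)"
  shows "a = b"
proof
  fix n
  define d where "d n = lorentz_term p q b n - lorentz_term p q a n" for n
  have d_nonneg: "0 \<le> d n" for n
    unfolding d_def using lorentz_term_mono[of q a n b for n] a_nonneg le \<open>0 < q\<close> by simp
  have "summable d" "suminf d \<le> 0"
    unfolding d_def using sa sb sums_le by (simp_all add: summable_diff suminf_diff[symmetric])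
  moreover have "0 \<le> suminf d"
    using \<open>summable d\<close> d_nonneg by (rule suminf_nonneg)
  ultimately have "d n = 0"
    using suminf_eq_zero_iff[OF \<open>summable d\<close>] d_nonneg by simp
  then have "b n powr q \<le> a n powr q"
    by (simp add: d_def lorentz_term_def)
  then show "a n = b n"
    using powr_le_powr_iff[of "b n" "a n" q] le[of n] a_nonneg[of n] \<open>0 < q\<close> by simp
qed

locale single_crossing =
  fixes a b :: "nat \<Rightarrow> real" and n0 :: nat
  assumes a_nonneg: "0 \<le> a n" and b_nonneg: "0 \<le> b n"
    and a_antimono: "m \<le> n \<Longrightarrow> a n \<le> a m"
    and below_crossing: "n < n0 \<Longrightarrow> a n \<le> b n"
    and above_crossing: "n0 \<le> n \<Longrightarrow> b n \<le> a n"
begin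

lemma vanishing_at_crossing_imp_le:
  assumes "a n0 = 0"
  shows "a n \<le> b n"
proof (cases "n < n0")
  case False
  then have "a n = 0" using a_antimono[of n0 n] a_nonneg[of n] assms by simp
  then show ?thesis using b_nonneg by simp
qed (rule below_crossing)

lemma summable_lorentz_term_b:
  assumes "0 \<le> q" "summable (lorentz_term p q a)"
  shows "summable (lorentz_term p q b)"
proof (rule summable_comparison_test'[OF assms(2)])
  fix n assume "n0 \<le> n"
  then show "norm (lorentz_term p q b n) \<le> lorentz_term p q a n"
    using lorentz_term_mono[of q b n a] assms(1) b_nonneg above_crossing
    by (simp add: lorentz_term_nonneg)
qed

lemma lorentz_term_diff_ge:
  assumes pos: "0 < a n0" and "0 < q0" and pq: "(p, q) \<in> tDelta p0 q0"
  obtains K where "0 < K"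
    and "\<And>n. K * (lorentz_term p0 q0 a n - lorentz_term p0 q0 b n) \<le> lorentz_term p q a n - lorentz_term p q b n"
proof -
  from pq have "0 < q" "q \<le> q0" "q0 / p0 \<le> q / p"
    by (auto simp: tDelta_def)
  define r where "r = q / q0"
  have r: "0 < r" "r \<le> 1"
    using \<open>0 < q\<close> \<open>q \<le> q0\<close> by (auto simp: r_def)
  define slope where "slope m = r * (a m powr q0) powr (r - 1) * real (Suc m) powr (q / p - q0 / p0)" for m
  have slope_mono: "slope m \<le> slope m'" if "m \<le> m'" "0 < a m'" for m m'
  proof -
    have "(a m powr q0) powr (r - 1) \<le> (a m' powr q0) powr (r - 1)"
      using that a_antimono[of m m'] r \<open>0 < q0\<close> by (intro powr_mono2' powr_mono2) auto
    moreover have "real (Suc m) powr (q / p - q0 / p0) \<le> real (Suc m') powr (q / p - q0 / p0)"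
      using that \<open>q0 / p0 \<le> q / p\<close> by (intro powr_mono2) auto
    ultimately show ?thesis
      unfolding slope_def using r by (intro mult_mono) auto
  qed
  have "slope n0 * (lorentz_term p0 q0 a n - lorentz_term p0 q0 b n)
      \<le> lorentz_term p q a n - lorentz_term p q b n" for n
  proof -
    define A where "A = a n powr q0"
    define B where "B = b n powr q0"
    define w where "w = real (Suc n) powr (q0 / p0 - 1)"
    define c where "c = real (Suc n) powr (q / p - q0 / p0)"
    have diff: "lorentz_term p q a n - lorentz_term p q b n = (A powr r - B powr r) * c * w"
      using \<open>0 < q0\<close> by (simp add: lorentz_term_def A_def B_def c_def w_def r_def powr_powr
          algebra_simps flip: powr_add)
    have diff0: "lorentz_term p0 q0 a n - lorentz_term p0 q0 b n = (A - B) * w"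
      by (simp add: lorentz_term_def A_def B_def w_def algebra_simps)
    show ?thesis
    proof (cases "a n = 0")
      case True
      then have "n0 \<le> n"
        using pos a_antimono[of n n0] by (cases "n0 \<le> n") auto
      then have "b n = 0"
        using above_crossing[of n] b_nonneg[of n] True by simp
      with True show ?thesis
        by (simp add: lorentz_term_def)
    next
      case False
      then have "0 < a n" "0 < A"
        using a_nonneg[of n] by (auto simp: A_def)
      \<comment> \<open>\<open>A - B\<close> changes sign only at \<open>n0\<close>, where the nondecreasing slope is evaluated\<close>
      have "slope n0 * (A - B) \<le> slope n * (A - B)"
      proof (cases "n < n0")
        case True
        then have "A \<le> B"
          using below_crossing[of n] a_nonneg \<open>0 < q0\<close> by (simp add: A_def B_def powr_mono2)
        then show ?thesis
          using slope_mono[of n n0] True pos by (simp add: mult_right_mono_neg)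
      next
        case False
        then have "B \<le> A"
          using above_crossing[of n] b_nonneg \<open>0 < q0\<close> by (simp add: A_def B_def powr_mono2)
        then show ?thesis
          using slope_mono[of n0 n] False \<open>0 < a n\<close> by (simp add: mult_right_mono)
      qed
      also have "slope n * (A - B) = r * A powr (r - 1) * (A - B) * c"
        by (simp add: slope_def A_def c_def)
      also have "\<dots> \<le> (A powr r - B powr r) * c"
        using powr_le_tangent[OF \<open>0 < A\<close> _ r, of B]
        by (intro mult_right_mono) (auto simp: B_def c_def algebra_simps)
      finally have "slope n0 * (A - B) * w \<le> (A powr r - B powr r) * c * w"
        by (rule mult_right_mono) (simp add: w_def)
      then show ?thesis
        unfolding diff diff0 by (simp add: mult.assoc)
    qed
  qed
  moreover have "0 < slope n0"
    using pos r by (simp add: slope_def)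
  ultimately show thesis
    using that by blast
qed

lemma sum_lorentz_term_transfer:
  assumes "0 < a n0" "0 < q0" "(p, q) \<in> tDelta p0 q0"
    and "(\<Sum>i<m. lorentz_term p0 q0 b i) \<le> (\<Sum>i<m. lorentz_term p0 q0 a i)"
  shows "(\<Sum>i<m. lorentz_term p q b i) \<le> (\<Sum>i<m. lorentz_term p q a i)"
proof -
  obtain K where K: "0 < K"
    "\<And>n. K * (lorentz_term p0 q0 a n - lorentz_term p0 q0 b n) \<le> lorentz_term p q a n - lorentz_term p q b n"
    using lorentz_term_diff_ge[OF assms(1-3)] by blast
  have "0 \<le> K * (\<Sum>i<m. lorentz_term p0 q0 a i - lorentz_term p0 q0 b i)"
    using K(1) assms(4) by (simp add: sum_subtractf)
  also have "\<dots> \<le> (\<Sum>i<m. lorentz_term p q a i - lorentz_term p q b i)"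
    unfolding sum_distrib_left by (intro sum_mono K(2))
  finally show ?thesis
    by (simp add: sum_subtractf)
qed

lemma suminf_lorentz_term_diff_ge:
  assumes "0 < a n0" "0 < q0" "(p, q) \<in> tDelta p0 q0"
    and "summable (lorentz_term p0 q0 a)" "summable (lorentz_term p0 q0 b)"
    and "summable (lorentz_term p q a)" "summable (lorentz_term p q b)"
  obtains K where "0 < K" and
    "K * (suminf (lorentz_term p0 q0 a) - suminf (lorentz_term p0 q0 b))
      \<le> suminf (lorentz_term p q a) - suminf (lorentz_term p q b)"
proof -
  obtain K where K: "0 < K"
    "\<And>n. K * (lorentz_term p0 q0 a n - lorentz_term p0 q0 b n) \<le> lorentz_term p q a n - lorentz_term p q b n"
    using lorentz_term_diff_ge[OF assms(1-3)] by blast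
  have "K * (suminf (lorentz_term p0 q0 a) - suminf (lorentz_term p0 q0 b))
      = (\<Sum>n. K * (lorentz_term p0 q0 a n - lorentz_term p0 q0 b n))"
    using assms(4,5) by (simp add: suminf_diff suminf_mult summable_diff)
  also have "\<dots> \<le> (\<Sum>n. lorentz_term p q a n - lorentz_term p q b n)"
    using assms(4-7) K(2) by (intro suminf_le summable_mult summable_diff)
  also have "\<dots> = suminf (lorentz_term p q a) - suminf (lorentz_term p q b)"
    using assms(6,7) by (simp add: suminf_diff)
  finally show thesis
    using that K(1) by blast
qed

lemma suminf_lorentz_term_transfer_le:
  assumes "0 < q0" "(p, q) \<in> tDelta p0 q0"
    and "summable (lorentz_term p0 q0 a)" "summable (lorentz_term p0 q0 b)"
    and "summable (lorentz_term p q a)" "summable (lorentz_term p q b)"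
    and "suminf (lorentz_term p0 q0 b) \<le> suminf (lorentz_term p0 q0 a)"
  shows "suminf (lorentz_term p q b) \<le> suminf (lorentz_term p q a)"
proof (cases "a n0 = 0")
  case True
  then have "a = b"
    using lorentz_term_suminf_dominated_eq[of q0 a b p0] assms a_nonneg
      vanishing_at_crossing_imp_le by blast
  then show ?thesis by simp
next
  case False
  then have "0 < a n0" using a_nonneg[of n0] by simp
  then obtain K where "0 < K" and "K * (suminf (lorentz_term p0 q0 a) - suminf (lorentz_term p0 q0 b))
      \<le> suminf (lorentz_term p q a) - suminf (lorentz_term p q b)"
    using suminf_lorentz_term_diff_ge assms(1-6) by blast
  moreover have "0 \<le> K * (suminf (lorentz_term p0 q0 a) - suminf (lorentz_term p0 q0 b))"
    using \<open>0 < K\<close> assms(7) by simp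
  ultimately show ?thesis by linarith
qed

lemma suminf_lorentz_term_transfer_less:
  assumes "0 < q0" "(p, q) \<in> tDelta p0 q0"
    and "summable (lorentz_term p0 q0 a)" "summable (lorentz_term p0 q0 b)"
    and "summable (lorentz_term p q a)" "summable (lorentz_term p q b)"
    and "suminf (lorentz_term p0 q0 b) < suminf (lorentz_term p0 q0 a)"
  shows "suminf (lorentz_term p q b) < suminf (lorentz_term p q a)"
proof (cases "a n0 = 0")
  case True
  then have "a = b"
    using lorentz_term_suminf_dominated_eq[of q0 a b p0] assms a_nonneg
      vanishing_at_crossing_imp_le by auto
  with assms(7) show ?thesis by simp
next
  case False
  then have "0 < a n0" using a_nonneg[of n0] by simp
  then obtain K where "0 < K" and "K * (suminf (lorentz_term p0 q0 a) - suminf (lorentz_term p0 q0 b))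
      \<le> suminf (lorentz_term p q a) - suminf (lorentz_term p q b)"
    using suminf_lorentz_term_diff_ge assms(1-6) by blast
  moreover have "0 < K * (suminf (lorentz_term p0 q0 a) - suminf (lorentz_term p0 q0 b))"
    using \<open>0 < K\<close> assms(7) by simp
  ultimately show ?thesis by linarith
qed

end

(* Divergence of the (p0,q0)-series lets the partial sums of a overtake those of the step
   sequence a 0 on [0, N), so that the crossing comparison applies to partial sums. *)
lemma step_sum_le_suminf_lorentz_term:
  fixes a :: "nat \<Rightarrow> real"
  assumes pos: "\<And>n. 0 < a n" and antimono: "\<And>m n. m \<le> n \<Longrightarrow> a n \<le> a m"
    and "0 < q0" "(p, q) \<in> tDelta p0 q0"
    and sa: "summable (lorentz_term p q a)" and not_sa0: "\<not> summable (lorentz_term p0 q0 a)"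
  shows "a 0 powr q * (\<Sum>i<N. real (Suc i) powr (q / p - 1)) \<le> suminf (lorentz_term p q a)"
proof -
  define b where "b n = (if n < N then a 0 else 0)" for n
  interpret single_crossing a b N
    by unfold_locales (use pos antimono in \<open>auto simp: b_def less_imp_le\<close>)
  have trunc: "(\<Sum>i<m. lorentz_term p' q' b i) = (\<Sum>i<N. lorentz_term p' q' b i)"
    if "N \<le> m" for m p' q'
    using that by (intro sum.mono_neutral_right) (auto simp: b_def lorentz_term_def)
  obtain m where "N \<le> m" and "(\<Sum>i<N. lorentz_term p0 q0 b i) \<le> (\<Sum>i<m. lorentz_term p0 q0 a i)"
  proof -
    obtain m' where "(\<Sum>i<N. lorentz_term p0 q0 b i) < (\<Sum>i<m'. lorentz_term p0 q0 a i)"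
      using not_sa0 summableI_nonneg_bounded[of "lorentz_term p0 q0 a"] lorentz_term_nonneg
      by (meson not_le)
    moreover have "(\<Sum>i<m'. lorentz_term p0 q0 a i) \<le> (\<Sum>i<max m' N. lorentz_term p0 q0 a i)"
      by (intro sum_mono2) (auto simp: lorentz_term_nonneg)
    ultimately show thesis
      using that[of "max m' N"] by simp
  qed
  then have "(\<Sum>i<m. lorentz_term p q b i) \<le> (\<Sum>i<m. lorentz_term p q a i)"
    using sum_lorentz_term_transfer[OF pos \<open>0 < q0\<close> \<open>(p, q) \<in> tDelta p0 q0\<close>] trunc[of m] by metis
  also have "\<dots> \<le> suminf (lorentz_term p q a)"
    using sa by (rule sum_le_suminf) (auto simp: lorentz_term_nonneg)
  finally show ?thesis
    using trunc[OF \<open>N \<le> m\<close>] by (simp add: sum_distrib_left lorentz_term_def b_def)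
qed

lemma summable_lorentz_term_embedding:
  fixes a :: "nat \<Rightarrow> real"
  assumes nonneg: "\<And>n. 0 \<le> a n" and antimono: "\<And>m n. m \<le> n \<Longrightarrow> a n \<le> a m"
    and "0 < q0" and pq: "(p, q) \<in> tDelta p0 q0"
    and sa: "summable (lorentz_term p q a)"
  shows "summable (lorentz_term p0 q0 a)"
proof (cases "\<exists>N. a N = 0")
  case True
  then obtain N where "a N = 0" by blast
  then have "lorentz_term p0 q0 a n = 0" if "n \<notin> {..<N}" for n
    using that antimono[of N n] nonneg[of n] by (simp add: lorentz_term_def)
  then show ?thesis
    by (intro summable_finite[of "{..<N}"]) auto
next
  case False
  then have pos: "0 < a n" for n
    using nonneg[of n] by (metis le_less)
  show ?thesis
  proof (rule ccontr)
    assume "\<not> summable (lorentz_term p0 q0 a)"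
    from step_sum_le_suminf_lorentz_term[OF pos antimono \<open>0 < q0\<close> pq sa this]
    have "summable (\<lambda>i. real (Suc i) powr (q / p - 1))"
      using pos[of 0] by (intro summableI_nonneg_bounded[where x = "suminf (lorentz_term p q a) / a 0 powr q"])
        (auto simp: field_simps)
    moreover have "0 < q / p"
      using pq by (auto simp: tDelta_def)
    ultimately show False
      using summable_Suc_iff[of "\<lambda>n. real n powr (q / p - 1)"] summable_real_powr_iff by simp
  qed
qed

context single_crossing
begin

lemma lorentz_seq_norm_transfer_le:
  assumes "0 < q0" "(p, q) \<in> tDelta p0 q0"
    and le0: "lorentz_seq_norm p0 q0 b \<le> lorentz_seq_norm p0 q0 a"
  shows "lorentz_seq_norm p q b \<le> lorentz_seq_norm p q a"
proof (cases "summable (lorentz_term p q a)")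
  case False
  then show ?thesis by (simp add: lorentz_seq_norm_def)
next
  case sa: True
  have "0 < q" using assms(2) by (simp add: tDelta_def)
  have sb: "summable (lorentz_term p q b)"
    using summable_lorentz_term_b \<open>0 < q\<close> sa by simp
  have sa0: "summable (lorentz_term p0 q0 a)"
    using summable_lorentz_term_embedding[OF a_nonneg a_antimono assms(1,2) sa] .
  then have sb0: "summable (lorentz_term p0 q0 b)"
    using le0 by (auto simp: lorentz_seq_norm_def split: if_splits)
  show ?thesis
    using suminf_lorentz_term_transfer_le[OF assms(1,2) sa0 sb0 sa sb] le0
      lorentz_seq_norm_le_iff[OF \<open>0 < q0\<close> sb0 sa0] lorentz_seq_norm_le_iff[OF \<open>0 < q\<close> sb sa]
    by simp
qed

lemma lorentz_seq_norm_transfer_less: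
  assumes "0 < q0" "(p, q) \<in> tDelta p0 q0"
    and finite: "lorentz_seq_norm p q b < \<infinity>"
    and less0: "lorentz_seq_norm p0 q0 b < lorentz_seq_norm p0 q0 a"
  shows "lorentz_seq_norm p q b < lorentz_seq_norm p q a"
proof (cases "summable (lorentz_term p q a)")
  case False
  then show ?thesis using finite by (simp add: lorentz_seq_norm_def)
next
  case sa: True
  have "0 < q" using assms(2) by (simp add: tDelta_def)
  have sb: "summable (lorentz_term p q b)"
    using finite by (auto simp: lorentz_seq_norm_def split: if_splits)
  have sa0: "summable (lorentz_term p0 q0 a)"
    using summable_lorentz_term_embedding[OF a_nonneg a_antimono assms(1,2) sa] .
  have sb0: "summable (lorentz_term p0 q0 b)"
    using less0 by (auto simp: lorentz_seq_norm_def split: if_splits)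
  show ?thesis
    using suminf_lorentz_term_transfer_less[OF assms(1,2) sa0 sb0 sa sb] less0
      lorentz_seq_norm_less_iff[OF \<open>0 < q0\<close> sb0 sa0] lorentz_seq_norm_less_iff[OF \<open>0 < q\<close> sb sa]
    by simp
qed

end

lemma dec_rearr_nonneg_antimono:
  fixes x :: "nat \<Rightarrow> real"
  assumes "Bseq x"
  shows "0 \<le> dec_rearr x n" and "m \<le> n \<Longrightarrow> dec_rearr x n \<le> dec_rearr x m"
proof -
  define S where "S n = {t. 0 \<le> t \<and> finite {k. t < \<bar>x k\<bar>} \<and> card {k. t < \<bar>x k\<bar>} \<le> n}" for n
  obtain B where "0 < B" "\<And>k. \<bar>x k\<bar> \<le> B"
    using assms by (auto simp: Bseq_def)
  then have "{k. B < \<bar>x k\<bar>} = {}"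
    by (auto simp: not_less)
  then have "B \<in> S n" for n
    using \<open>0 < B\<close> by (simp add: S_def)
  then have nonempty: "S n \<noteq> {}" for n by blast
  have dec_rearr_eq: "dec_rearr x n = Inf (S n)" for n
    by (simp add: dec_rearr_def S_def)
  show "0 \<le> dec_rearr x n"
    unfolding dec_rearr_eq using nonempty by (rule cInf_greatest) (simp add: S_def)
  show "m \<le> n \<Longrightarrow> dec_rearr x n \<le> dec_rearr x m"
    unfolding dec_rearr_eq using nonempty
    by (intro cInf_superset_mono bdd_belowI[of _ 0]) (auto simp: S_def)
qed

lemma lessgtr_imp_single_crossing:
  assumes "Bseq x" "Bseq y" "lessgtr x y"
  obtains n0 where "single_crossing (dec_rearr x) (dec_rearr y) n0"
  using assms dec_rearr_nonneg_antimono[OF \<open>Bseq x\<close>] dec_rearr_nonneg_antimono[OF \<open>Bseq y\<close>]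
  unfolding lessgtr_def single_crossing_def by metis

definition two_point :: "real \<Rightarrow> real \<Rightarrow> nat \<Rightarrow> real" where
  "two_point \<alpha> \<beta> k = (if k = 0 then \<alpha> else if k = 1 then \<beta> else 0)"

definition two_point_power_sum :: "real \<Rightarrow> real \<Rightarrow> real \<Rightarrow> real \<Rightarrow> real" where
  "two_point_power_sum p q \<alpha> \<beta> = \<alpha> powr q + \<beta> powr q * 2 powr (q / p - 1)"

lemma two_point_power_sum_nonneg: "0 \<le> two_point_power_sum p q \<alpha> \<beta>"
  by (simp add: two_point_power_sum_def)

lemma finite_support_two_point:
  "finite {k. two_point \<alpha> \<beta> k \<noteq> 0} \<and> card {k. two_point \<alpha> \<beta> k \<noteq> 0} \<le> 2"
proof -
  have sub: "{k. two_point \<alpha> \<beta> k \<noteq> 0} \<subseteq> {0, 1}"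
    by (auto simp: two_point_def)
  then have "card {k. two_point \<alpha> \<beta> k \<noteq> 0} \<le> card {0 :: nat, 1}"
    by (intro card_mono) auto
  then show ?thesis
    using finite_subset[OF sub] by simp
qed

lemma dec_rearr_two_point:
  assumes "0 < \<beta>" "\<beta> \<le> \<alpha>"
  shows "dec_rearr (two_point \<alpha> \<beta>) = two_point \<alpha> \<beta>"
proof
  fix n
  have level_set: "{k. t < \<bar>two_point \<alpha> \<beta> k\<bar>} = (if t < \<beta> then {0, 1} else if t < \<alpha> then {0} else {})"
    if "0 \<le> t" for t
    using that assms by (auto simp: two_point_def)
  have "0 \<le> t \<and> finite {k. t < \<bar>two_point \<alpha> \<beta> k\<bar>} \<and> card {k. t < \<bar>two_point \<alpha> \<beta> k\<bar>} \<le> n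
      \<longleftrightarrow> two_point \<alpha> \<beta> n \<le> t" for t
  proof (cases "0 \<le> t")
    case True
    then show ?thesis
      unfolding level_set[OF True] using assms by (auto simp: two_point_def)
  next
    case False
    then show ?thesis
      using assms by (auto simp: two_point_def)
  qed
  then have "{t. 0 \<le> t \<and> finite {k. t < \<bar>two_point \<alpha> \<beta> k\<bar>} \<and> card {k. t < \<bar>two_point \<alpha> \<beta> k\<bar>} \<le> n}
      = {two_point \<alpha> \<beta> n..}"
    by auto
  then show "dec_rearr (two_point \<alpha> \<beta>) n = two_point \<alpha> \<beta> n"
    by (simp add: dec_rearr_def)
qed

lemma lorentz_norm_two_point:
  assumes "0 < \<beta>" "\<beta> \<le> \<alpha>"
  shows "lorentz_norm p q (two_point \<alpha> \<beta>) = ereal (two_point_power_sum p q \<alpha> \<beta> powr (1 / q))"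
proof -
  have vanish: "lorentz_term p q (two_point \<alpha> \<beta>) n = 0" if "n \<notin> {0, 1}" for n
    using that by (simp add: lorentz_term_def two_point_def)
  have "summable (lorentz_term p q (two_point \<alpha> \<beta>))"
    using vanish by (intro summable_finite[of "{0, 1}"]) auto
  moreover have "suminf (lorentz_term p q (two_point \<alpha> \<beta>)) = (\<Sum>n\<in>{0, 1}. lorentz_term p q (two_point \<alpha> \<beta>) n)"
    using vanish by (intro suminf_finite) auto
  ultimately have "lorentz_seq_norm p q (two_point \<alpha> \<beta>) = ereal (two_point_power_sum p q \<alpha> \<beta> powr (1 / q))"
    by (simp add: lorentz_seq_norm_def lorentz_term_def two_point_def two_point_power_sum_def)
  then show ?thesis
    using assms by (simp add: lorentz_norm_eq_seq_norm dec_rearr_two_point)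
qed

lemma lessgtr_two_point:
  assumes "0 < \<beta>" "\<beta> \<le> \<beta>'" "\<beta>' \<le> \<alpha>'" "\<alpha>' \<le> \<alpha>"
  shows "lessgtr (two_point \<alpha>' \<beta>') (two_point \<alpha> \<beta>)"
  unfolding lessgtr_def using assms
  by (intro exI[of _ 1]) (auto simp: dec_rearr_two_point two_point_def)

lemma has_real_derivative_two_point_power_sum:
  assumes "0 < \<rho>" "0 < q"
  shows "((\<lambda>h. two_point_power_sum p q (1 - r * h) (\<rho> + h)) has_real_derivative
    q * (2 powr (q / p - 1) * \<rho> powr (q - 1) - r)) (at 0)"
proof -
  have "((\<lambda>h. 1 - r * h) has_real_derivative 0 - r * 1) (at 0)"
    by (intro derivative_intros DERIV_cmult DERIV_ident)
  from DERIV_fun_powr[OF this, of q]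
  have "((\<lambda>h. (1 - r * h) powr q) has_real_derivative q * (1 - r * 0) powr (q - 1) * (0 - r * 1)) (at 0)"
    by simp
  moreover have "((\<lambda>h. \<rho> + h) has_real_derivative 0 + 1) (at 0)"
    by (intro derivative_intros)
  from DERIV_fun_powr[OF this, of q]
  have "((\<lambda>h. (\<rho> + h) powr q) has_real_derivative q * (\<rho> + 0) powr (q - 1) * (0 + 1)) (at 0)"
    using assms by simp
  ultimately have "((\<lambda>h. (1 - r * h) powr q + (\<rho> + h) powr q * 2 powr (q / p - 1)) has_real_derivative
      q * (1 - r * 0) powr (q - 1) * (0 - r * 1) + q * (\<rho> + 0) powr (q - 1) * (0 + 1) * 2 powr (q / p - 1)) (at 0)"
    by (intro DERIV_add DERIV_cmult_right)
  then show ?thesis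
    by (simp add: two_point_power_sum_def algebra_simps)
qed

lemma two_point_perturbation:
  assumes "0 < q0" "0 < q" "0 < \<rho>" "\<rho> < 1"
    and gap: "2 powr (q / p - 1) * \<rho> powr (q - 1) < 2 powr (q0 / p0 - 1) * \<rho> powr (q0 - 1)"
  obtains \<alpha> \<beta> where "\<rho> \<le> \<beta>" "\<beta> \<le> \<alpha>" "\<alpha> \<le> 1"
    and "two_point_power_sum p0 q0 1 \<rho> < two_point_power_sum p0 q0 \<alpha> \<beta>"
    and "two_point_power_sum p q \<alpha> \<beta> < two_point_power_sum p q 1 \<rho>"
proof -
  define D where "D = 2 powr (q / p - 1) * \<rho> powr (q - 1)"
  define E where "E = 2 powr (q0 / p0 - 1) * \<rho> powr (q0 - 1)"
  define r where "r = (D + E) / 2"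
  have "0 < D" "D < E"
    using \<open>0 < \<rho>\<close> gap by (simp_all add: D_def E_def)
  then have "0 < r" "0 < E - r" "D - r < 0"
    by (simp_all add: r_def)
  have "eventually (\<lambda>h. two_point_power_sum p0 q0 1 \<rho> < two_point_power_sum p0 q0 (1 - r * h) (\<rho> + h)) (at_right 0)"
    using eventually_at_right_of_DERIV(1)[OF has_real_derivative_two_point_power_sum[OF \<open>0 < \<rho>\<close> \<open>0 < q0\<close>, of p0 r]]
      \<open>0 < E - r\<close> \<open>0 < q0\<close> by (simp add: E_def)
  moreover have "eventually (\<lambda>h. two_point_power_sum p q (1 - r * h) (\<rho> + h) < two_point_power_sum p q 1 \<rho>) (at_right 0)"
    using eventually_at_right_of_DERIV(2)[OF has_real_derivative_two_point_power_sum[OF \<open>0 < \<rho>\<close> \<open>0 < q\<close>, of p r]]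
      \<open>D - r < 0\<close> \<open>0 < q\<close> by (simp add: D_def mult_pos_neg)
  moreover have "eventually (\<lambda>h. h \<in> {0<..<(1 - \<rho>) / (1 + r)}) (at_right 0)"
    using \<open>\<rho> < 1\<close> \<open>0 < r\<close> by (intro eventually_at_right_real) simp
  ultimately obtain h where h: "0 < h" "h < (1 - \<rho>) / (1 + r)"
    and "two_point_power_sum p0 q0 1 \<rho> < two_point_power_sum p0 q0 (1 - r * h) (\<rho> + h)"
    and "two_point_power_sum p q (1 - r * h) (\<rho> + h) < two_point_power_sum p q 1 \<rho>"
    using eventually_happens[OF eventually_conj[OF _ eventually_conj]] trivial_limit_at_right_real
    by (smt (verit) greaterThanLessThan_iff)
  moreover have "\<rho> + h \<le> 1 - r * h"
    using h \<open>0 < r\<close> by (simp add: field_simps)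
  ultimately show thesis
    using that[of "\<rho> + h" "1 - r * h"] \<open>0 < r\<close> by simp
qed

lemma outside_tDelta_cases:
  assumes "0 < p" "0 < p0" "0 < q0" "(p, q) \<notin> tDelta p0 q0"
  shows "q0 < q \<or> q / p < q0 / p0"
proof (rule ccontr)
  assume "\<not> ?thesis"
  then have "q \<le> q0" "q0 / p0 \<le> q / p" by auto
  moreover have "p \<le> p0"
  proof -
    have "q0 / p0 \<le> q0 / p"
      using \<open>q0 / p0 \<le> q / p\<close> \<open>q \<le> q0\<close> \<open>0 < p\<close> by (smt (verit) divide_right_mono)
    then show ?thesis
      using assms(1-3) by (meson dual_order.refl frac_less2 linorder_not_le)
  qed
  moreover have "0 < q"
    using \<open>q0 / p0 \<le> q / p\<close> assms(1-3) by (smt (verit) divide_pos_pos divide_nonpos_pos)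
  ultimately show False
    using assms by (simp add: tDelta_def)
qed

lemma outside_tDelta_gap:
  assumes "0 < p" "0 < p0" "0 < q0" "(p, q) \<notin> tDelta p0 q0"
  obtains \<rho> :: real where "0 < \<rho>" "\<rho> < 1"
    and "2 powr (q / p - 1) * \<rho> powr (q - 1) < 2 powr (q0 / p0 - 1) * \<rho> powr (q0 - 1)"
proof -
  obtain t where "0 < t" "q / p - q0 / p0 < t * (q - q0)"
    using exists_pos_mult_gt[of "q / p - q0 / p0" "q - q0"] outside_tDelta_cases[OF assms] by auto
  have "2 powr (q / p - 1) * (2 powr - t) powr (q - 1) = 2 powr (q / p - 1 - t * (q - 1))"
    and "2 powr (q0 / p0 - 1) * (2 powr - t) powr (q0 - 1) = 2 powr (q0 / p0 - 1 - t * (q0 - 1))"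
    by (simp_all add: powr_powr flip: powr_add)
  moreover have "q / p - 1 - t * (q - 1) < q0 / p0 - 1 - t * (q0 - 1)"
    using \<open>q / p - q0 / p0 < t * (q - q0)\<close> by (simp add: algebra_simps)
  ultimately show thesis
    using \<open>0 < t\<close> by (intro that[of "2 powr - t"]) (auto simp: powr_less_one)
qed

theorem mainTheorem10:
  fixes p0 q0 :: real
  assumes "0 < p0" and "0 < q0"
  shows
    "(\<forall>x y :: nat \<Rightarrow> real. \<forall>p q.
        x \<longlonglongrightarrow> 0 \<longrightarrow> y \<longlonglongrightarrow> 0 \<longrightarrow> lessgtr x y \<longrightarrow> (p, q) \<in> tDelta p0 q0 \<longrightarrow>
        lorentz_norm p0 q0 x \<ge> lorentz_norm p0 q0 y \<longrightarrow>
        lorentz_norm p q x \<ge> lorentz_norm p q y)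
   \<and> (\<forall>x y :: nat \<Rightarrow> real. \<forall>p q.
        x \<longlonglongrightarrow> 0 \<longrightarrow> y \<longlonglongrightarrow> 0 \<longrightarrow> lessgtr x y \<longrightarrow> (p, q) \<in> tDelta p0 q0 \<longrightarrow>
        lorentz_norm p q y < \<infinity> \<longrightarrow>
        lorentz_norm p0 q0 x > lorentz_norm p0 q0 y \<longrightarrow>
        lorentz_norm p q x > lorentz_norm p q y)
   \<and> (\<forall>p q. 0 < p \<longrightarrow> 0 < q \<longrightarrow> (p, q) \<notin> tDelta p0 q0 \<longrightarrow>
        (\<exists>x y :: nat \<Rightarrow> real.
           finite {k. x k \<noteq> 0} \<and> card {k. x k \<noteq> 0} \<le> 2 \<and>
           finite {k. y k \<noteq> 0} \<and> card {k. y k \<noteq> 0} \<le> 2 \<and>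
           lessgtr x y \<and>
           lorentz_norm p0 q0 x > lorentz_norm p0 q0 y \<and>
           lorentz_norm p q x < lorentz_norm p q y))"
proof (intro conjI allI impI)
  fix x y :: "nat \<Rightarrow> real" and p q :: real
  assume "x \<longlonglongrightarrow> 0" "y \<longlonglongrightarrow> 0" "lessgtr x y"
  then obtain n0 where crossing: "single_crossing (dec_rearr x) (dec_rearr y) n0"
    by (meson lessgtr_imp_single_crossing convergent_imp_Bseq convergentI)
  assume "(p, q) \<in> tDelta p0 q0"
  then show "lorentz_norm p0 q0 y \<le> lorentz_norm p0 q0 x \<Longrightarrow> lorentz_norm p q y \<le> lorentz_norm p q x"
    and "lorentz_norm p q y < \<infinity> \<Longrightarrow> lorentz_norm p0 q0 y < lorentz_norm p0 q0 x \<Longrightarrow>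
      lorentz_norm p q y < lorentz_norm p q x"
    unfolding lorentz_norm_eq_seq_norm
    using single_crossing.lorentz_seq_norm_transfer_le[OF crossing \<open>0 < q0\<close>]
      single_crossing.lorentz_seq_norm_transfer_less[OF crossing \<open>0 < q0\<close>] by blast+
next
  fix p q :: real
  assume "0 < p" "0 < q" "(p, q) \<notin> tDelta p0 q0"
  then obtain \<rho> where \<rho>: "0 < \<rho>" "\<rho> < 1"
    and "2 powr (q / p - 1) * \<rho> powr (q - 1) < 2 powr (q0 / p0 - 1) * \<rho> powr (q0 - 1)"
    using outside_tDelta_gap \<open>0 < p0\<close> \<open>0 < q0\<close> by blast
  then obtain \<alpha> \<beta> where "\<rho> \<le> \<beta>" "\<beta> \<le> \<alpha>" "\<alpha> \<le> 1"
    and "two_point_power_sum p0 q0 1 \<rho> < two_point_power_sum p0 q0 \<alpha> \<beta>"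
    and "two_point_power_sum p q \<alpha> \<beta> < two_point_power_sum p q 1 \<rho>"
    using two_point_perturbation \<open>0 < q0\<close> \<open>0 < q\<close> by blast
  with \<rho> show "\<exists>x y :: nat \<Rightarrow> real.
           finite {k. x k \<noteq> 0} \<and> card {k. x k \<noteq> 0} \<le> 2 \<and>
           finite {k. y k \<noteq> 0} \<and> card {k. y k \<noteq> 0} \<le> 2 \<and>
           lessgtr x y \<and>
           lorentz_norm p0 q0 x > lorentz_norm p0 q0 y \<and>
           lorentz_norm p q x < lorentz_norm p q y"
    using \<open>0 < q0\<close> \<open>0 < q\<close>
    by (intro exI[of _ "two_point \<alpha> \<beta>"] exI[of _ "two_point 1 \<rho>"])
      (simp add: finite_support_two_point lessgtr_two_point lorentz_norm_two_point
        powr_less_powr_iff two_point_power_sum_nonneg)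
qed

end
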